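(* Consider the surface-mounted permanent magnet synchronous machine (SPMSM) model with state $x=(i_\alpha,i_\beta,\omega,\theta)^T$, input $\mathcal{V}=(v_\alpha,v_\beta)^T$ and output $y=h(x)=(i_\alpha,i_\beta)^T$: \[ \frac{d}{dt}\begin{bmatrix}i_\alpha\\ i_\beta\end{bmatrix}=\frac{1}{L_0}\Big(\mathcal{V}-R\begin{bmatrix}i_\alpha\\ i_\beta\end{bmatrix}-\psi_r\,\omega\begin{bmatrix}-\sin\theta\\ \cos\theta\end{bmatrix}\Big),\quad \frac{d\omega}{dt}=\frac{p}{J}(T_m-T_l),\quad \frac{d\theta}{dt}=\omega, \] with $T_m=\frac{3p}{2}\psi_r(i_\beta\cos\theta-i_\alpha\sin\theta)$. Let $i_d=i_\alpha\cos\theta+i_\beta\sin\theta$. Then: (i) the determinant of the $4\times4$ matrix $\frac{\partial}{\partial x}\begin{bmatrix}h\\ \mathcal{L}_fh\end{bmatrix}$ equals $\Delta_{y1}=\omega\,(\psi_r/L_0)^2$, so the rank condition holds whenever $\omega\neq0$; (ii) the determinant of the $4\times4$ matrix $\frac{\partial}{\partial x}\begin{bmatrix}h\\ \mathcal{L}_f^2h\end{bmatrix}$ equals \[ \Delta_{y2}=\frac{\psi_r^2}{L_0^2}\Big[\Big(2\omega^2+\frac{R^2}{L_0^2}+\frac{3p^2}{J}\psi_r i_d\Big)\omega-\frac{R}{L_0}\frac{d\omega}{dt}\Big]. \] In particular, at zero speed $\omega=0$ the SPMSM is locally weakly observable if the rotor acceleration $\frac{d\omega}{dt}$ is nonzero.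 *)

theory Defs
  imports "HOL-Analysis.Analysis"
begin

text \<open>State x = (i_alpha, i_beta, omega, theta) is a vector in real^4 with
  components x$1, x$2, x$3, x$4 respectively.\<close>

definition pderiv4 :: "(real^4 \<Rightarrow> real) \<Rightarrow> 4 \<Rightarrow> real^4 \<Rightarrow> real" where
  "pderiv4 \<phi> j x = deriv (\<lambda>t. \<phi> (x + t *\<^sub>R axis j 1)) 0"

definition lie_deriv :: "(real^4 \<Rightarrow> real^4) \<Rightarrow> (real^4 \<Rightarrow> real) \<Rightarrow> real^4 \<Rightarrow> real" where
  "lie_deriv F \<phi> x = (\<Sum>j\<in>UNIV. pderiv4 \<phi> j x * F x $ j)"

definition jacobian4 :: "(real^4 \<Rightarrow> real^4) \<Rightarrow> real^4 \<Rightarrow> real^4^4" where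
  "jacobian4 G x = (\<chi> i j. pderiv4 (\<lambda>y. G y $ i) j x)"

definition spmsm_Tm :: "real \<Rightarrow> real \<Rightarrow> real^4 \<Rightarrow> real" where
  "spmsm_Tm p psi x = 3 * p / 2 * psi * (x$2 * cos (x$4) - x$1 * sin (x$4))"

text \<open>SPMSM vector field (input v = (va, vb) and load torque Tl held constant).\<close>
definition spmsm_f :: "real \<Rightarrow> real \<Rightarrow> real \<Rightarrow> real \<Rightarrow> real \<Rightarrow> real \<Rightarrow> real \<Rightarrow> real
    \<Rightarrow> real^4 \<Rightarrow> real^4" where
  "spmsm_f L0 R psi p J Tl va vb x =
     (\<chi> k. if k = 1 then (va - R * x$1 - psi * x$3 * (- sin (x$4))) / L0
           else if k = 2 then (vb - R * x$2 - psi * x$3 * cos (x$4)) / L0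
           else if k = 3 then p / J * (spmsm_Tm p psi x - Tl)
           else x$3)"

definition stack_obs :: "(real^4 \<Rightarrow> real^4) \<Rightarrow> nat \<Rightarrow> real^4 \<Rightarrow> real^4" where
  "stack_obs F k y = vector [y$1, y$2, ((lie_deriv F ^^ k) (\<lambda>z. z$1)) y,
                                      ((lie_deriv F ^^ k) (\<lambda>z. z$2)) y]"

end

theory Submission
  imports Defs
begin

text \<open>Since h picks out the coordinates i_alpha, i_beta, the Jacobian of [h; L_f^k h]
  has an identity block in its upper left corner, so its determinant is the 2 by 2
  determinant of the partials of L_f^k h with respect to omega and theta. For k = 1
  these partials are the back-EMF coefficients and the determinant is
  omega (psi/L0)^2. For k = 2 one computes L_f^2 h by the chain rule,
  L_f (f_i) = sum_j (d f_i / d x_j) f_j, differentiates once more, and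
  sin^2 + cos^2 = 1 collapses the 2 by 2 determinant to Delta_y2.\<close>

lemma vector_4_nth [simp]:
  "(vector [a, b, c, d] :: 'a::zero^4) $ 1 = a"
  "(vector [a, b, c, d] :: 'a::zero^4) $ 2 = b"
  "(vector [a, b, c, d] :: 'a::zero^4) $ 3 = c"
  "(vector [a, b, c, d] :: 'a::zero^4) $ 4 = d"
  unfolding vector_def by simp_all

lemma det_4_identity_block:
  fixes A :: "'a::comm_ring_1^4^4"
  assumes "A$1$1 = 1" "A$1$2 = 0" "A$1$3 = 0" "A$1$4 = 0"
    and "A$2$1 = 0" "A$2$2 = 1" "A$2$3 = 0" "A$2$4 = 0"
  shows "det A = A$3$3 * A$4$4 - A$3$4 * A$4$3"
proof -
  have f1: "finite {2::4, 3, 4}" "1 \<notin> {2::4, 3, 4}"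
    and f2: "finite {3::4, 4}" "2 \<notin> {3::4, 4}"
    and f3: "finite {4::4}" "3 \<notin> {4::4}" by auto
  show ?thesis
    unfolding det_def UNIV_4 sum_over_permutations_insert[OF f1]
      sum_over_permutations_insert[OF f2] sum_over_permutations_insert[OF f3] permutes_sing
    by (simp add: assms sign_swap_id permutation_swap_id sign_compose sign_id swap_id_eq)
qed

lemma add_scaleR_axis_nth: "(x + t *\<^sub>R axis j 1) $ k = x$k + (if k = j then t else 0)"
  by (simp add: axis_def)

lemma pderiv4_coord: "pderiv4 (\<lambda>y. y$k) j x = (if k = j then 1 else 0)"
  unfolding pderiv4_def add_scaleR_axis_nth
  by (rule DERIV_imp_deriv) (auto intro!: derivative_eq_intros)

lemma lie_deriv_coord: "lie_deriv F (\<lambda>z. z$k) = (\<lambda>y. F y $ k)"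
proof
  fix y
  show "lie_deriv F (\<lambda>z. z$k) y = F y $ k"
    using exhaust_4[of k] by (auto simp: lie_deriv_def pderiv4_coord sum_4)
qed

lemma det_jacobian4_stack_obs:
  "det (jacobian4 (stack_obs F k) x) =
     pderiv4 ((lie_deriv F ^^ k) (\<lambda>z. z$1)) 3 x * pderiv4 ((lie_deriv F ^^ k) (\<lambda>z. z$2)) 4 x
   - pderiv4 ((lie_deriv F ^^ k) (\<lambda>z. z$1)) 4 x * pderiv4 ((lie_deriv F ^^ k) (\<lambda>z. z$2)) 3 x"
  by (subst det_4_identity_block)
     (simp_all add: jacobian4_def stack_obs_def pderiv4_coord del: funpow.simps)

context
  fixes L0 R psi p J Tl va vb :: real
  assumes L0: "L0 \<noteq> 0" and J: "J \<noteq> 0"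
begin

lemma spmsm_f_nth:
  "spmsm_f L0 R psi p J Tl va vb y $ 1 = (va - R * y$1 + psi * y$3 * sin (y$4)) / L0"
  "spmsm_f L0 R psi p J Tl va vb y $ 2 = (vb - R * y$2 - psi * y$3 * cos (y$4)) / L0"
  "spmsm_f L0 R psi p J Tl va vb y $ 3 =
     p / J * (3 * p / 2 * psi * (y$2 * cos (y$4) - y$1 * sin (y$4)) - Tl)"
  "spmsm_f L0 R psi p J Tl va vb y $ 4 = y$3"
  by (simp_all add: spmsm_f_def spmsm_Tm_def)

lemma pderiv4_spmsm_f_1:
  "pderiv4 (\<lambda>y. spmsm_f L0 R psi p J Tl va vb y $ 1) j x =
     (if j = 1 then - R / L0 else if j = 3 then psi * sin (x$4) / L0
      else if j = 4 then psi * x$3 * cos (x$4) / L0 else 0)"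
  unfolding spmsm_f_nth pderiv4_def add_scaleR_axis_nth
  using exhaust_4[of j]
  by (elim disjE)
     (simp; rule DERIV_imp_deriv; auto intro!: derivative_eq_intros simp: field_simps L0)+

lemma pderiv4_spmsm_f_2:
  "pderiv4 (\<lambda>y. spmsm_f L0 R psi p J Tl va vb y $ 2) j x =
     (if j = 2 then - R / L0 else if j = 3 then - psi * cos (x$4) / L0
      else if j = 4 then psi * x$3 * sin (x$4) / L0 else 0)"
  unfolding spmsm_f_nth pderiv4_def add_scaleR_axis_nth
  using exhaust_4[of j]
  by (elim disjE)
     (simp; rule DERIV_imp_deriv; auto intro!: derivative_eq_intros simp: field_simps L0)+

definition spmsm_lie2_alpha :: "real^4 \<Rightarrow> real" where
  "spmsm_lie2_alpha y = (- R * spmsm_f L0 R psi p J Tl va vb y $ 1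
     + psi * sin (y$4) * spmsm_f L0 R psi p J Tl va vb y $ 3 + psi * (y$3)^2 * cos (y$4)) / L0"

definition spmsm_lie2_beta :: "real^4 \<Rightarrow> real" where
  "spmsm_lie2_beta y = (- R * spmsm_f L0 R psi p J Tl va vb y $ 2
     - psi * cos (y$4) * spmsm_f L0 R psi p J Tl va vb y $ 3 + psi * (y$3)^2 * sin (y$4)) / L0"

lemma lie_deriv_spmsm_f_1:
  "lie_deriv (spmsm_f L0 R psi p J Tl va vb) (\<lambda>y. spmsm_f L0 R psi p J Tl va vb y $ 1)
     = spmsm_lie2_alpha"
proof
  fix y
  show "lie_deriv (spmsm_f L0 R psi p J Tl va vb) (\<lambda>y. spmsm_f L0 R psi p J Tl va vb y $ 1) y
     = spmsm_lie2_alpha y"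
    by (simp add: lie_deriv_def sum_4 pderiv4_spmsm_f_1 spmsm_lie2_alpha_def spmsm_f_nth(4)
        power2_eq_square field_simps L0)
qed

lemma lie_deriv_spmsm_f_2:
  "lie_deriv (spmsm_f L0 R psi p J Tl va vb) (\<lambda>y. spmsm_f L0 R psi p J Tl va vb y $ 2)
     = spmsm_lie2_beta"
proof
  fix y
  show "lie_deriv (spmsm_f L0 R psi p J Tl va vb) (\<lambda>y. spmsm_f L0 R psi p J Tl va vb y $ 2) y
     = spmsm_lie2_beta y"
    by (simp add: lie_deriv_def sum_4 pderiv4_spmsm_f_2 spmsm_lie2_beta_def spmsm_f_nth(4)
        power2_eq_square field_simps L0)
qed

lemma pderiv4_spmsm_lie2_alpha:
  "pderiv4 spmsm_lie2_alpha 3 x = (2 * psi * x$3 * cos (x$4) - R * psi * sin (x$4) / L0) / L0"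
  "pderiv4 spmsm_lie2_alpha 4 x =
     (psi * cos (x$4) * spmsm_f L0 R psi p J Tl va vb x $ 3
      - 3 * p^2 / (2 * J) * psi^2 * sin (x$4) * (x$1 * cos (x$4) + x$2 * sin (x$4))
      - psi * (x$3)^2 * sin (x$4) - R * psi * x$3 * cos (x$4) / L0) / L0"
  unfolding spmsm_lie2_alpha_def spmsm_f_nth pderiv4_def add_scaleR_axis_nth
  by (simp; rule DERIV_imp_deriv;
      auto intro!: derivative_eq_intros simp: field_simps power2_eq_square L0 J)+

lemma pderiv4_spmsm_lie2_beta:
  "pderiv4 spmsm_lie2_beta 3 x = (2 * psi * x$3 * sin (x$4) + R * psi * cos (x$4) / L0) / L0"
  "pderiv4 spmsm_lie2_beta 4 x =
     (psi * sin (x$4) * spmsm_f L0 R psi p J Tl va vb x $ 3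
      + 3 * p^2 / (2 * J) * psi^2 * cos (x$4) * (x$1 * cos (x$4) + x$2 * sin (x$4))
      + psi * (x$3)^2 * cos (x$4) - R * psi * x$3 * sin (x$4) / L0) / L0"
  unfolding spmsm_lie2_beta_def spmsm_f_nth pderiv4_def add_scaleR_axis_nth
  by (simp; rule DERIV_imp_deriv;
      auto intro!: derivative_eq_intros simp: field_simps power2_eq_square L0 J)+

lemma det_jacobian4_spmsm_first_lie:
  "det (jacobian4 (stack_obs (spmsm_f L0 R psi p J Tl va vb) 1) x) = x$3 * (psi / L0)^2"
  by (simp add: det_jacobian4_stack_obs lie_deriv_coord pderiv4_spmsm_f_1 pderiv4_spmsm_f_2
      field_simps L0) (insert sin_cos_squared_add[of "x$4"], algebra)

lemma det_jacobian4_spmsm_second_lie: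
  "det (jacobian4 (stack_obs (spmsm_f L0 R psi p J Tl va vb) 2) x) =
     psi^2 / L0^2 * ((2 * (x$3)^2 + R^2 / L0^2
                      + 3 * p^2 / J * psi * (x$1 * cos (x$4) + x$2 * sin (x$4))) * x$3
                     - R / L0 * spmsm_f L0 R psi p J Tl va vb x $ 3)"
proof -
  have lie2: "(lie_deriv (spmsm_f L0 R psi p J Tl va vb) ^^ 2) (\<lambda>z. z$1) = spmsm_lie2_alpha"
    "(lie_deriv (spmsm_f L0 R psi p J Tl va vb) ^^ 2) (\<lambda>z. z$2) = spmsm_lie2_beta"
    by (simp_all add: numeral_2_eq_2 lie_deriv_coord lie_deriv_spmsm_f_1 lie_deriv_spmsm_f_2)
  show ?thesis
    unfolding det_jacobian4_stack_obs lie2 pderiv4_spmsm_lie2_alpha pderiv4_spmsm_lie2_beta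
    by (simp add: field_simps L0 J) (insert sin_cos_squared_add[of "x$4"], algebra)
qed

end

theorem mainTheorem2:
  fixes L0 R psi p J Tl va vb :: real and x :: "real^4"
  assumes "L0 > 0" and "R > 0" and "psi > 0" and "p > 0" and "J > 0"
  defines "F \<equiv> spmsm_f L0 R psi p J Tl va vb"
  defines "i_d \<equiv> x$1 * cos (x$4) + x$2 * sin (x$4)"
  defines "domega \<equiv> F x $ 3"
  shows "det (jacobian4 (stack_obs F 1) x) = x$3 * (psi / L0)^2
       \<and> (x$3 \<noteq> 0 \<longrightarrow> det (jacobian4 (stack_obs F 1) x) \<noteq> 0)
       \<and> det (jacobian4 (stack_obs F 2) x) =
           psi^2 / L0^2 * ((2 * (x$3)^2 + R^2 / L0^2 + 3 * p^2 / J * psi * i_d) * x$3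
                           - R / L0 * domega)
       \<and> (x$3 = 0 \<and> domega \<noteq> 0 \<longrightarrow> det (jacobian4 (stack_obs F 2) x) \<noteq> 0)"
proof -
  have "L0 \<noteq> 0" "J \<noteq> 0" using assms by auto
  note first = det_jacobian4_spmsm_first_lie[OF this, of R psi p Tl va vb x]
    and second = det_jacobian4_spmsm_second_lie[OF this, of R psi p Tl va vb x]
  show ?thesis
    unfolding F_def i_d_def domega_def first second
    using assms(1-3) by simp
qed

end
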